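(* Let $\sigma\in\operatorname{Hom}(\pi_1(M),\mathrm{SU}(2))$, let $(x,y,z)=(\operatorname{tr}\sigma(X),\operatorname{tr}\sigma(Y),\operatorname{tr}\sigma(XY))$ and $k=\operatorname{tr}\sigma(K)$. Then $[\sigma]$ is a $\mathrm{Pin}(2)$ representation class but not a $\mathrm{Spin}(2)$ representation class if and only if $k\ne 2$ and at least two of $x,y,z$ are zero.
   Context: $M$ is a torus with one boundary component; $\pi_1(M)$ is the free group on $X,Y$ and $K=XYX^{-1}Y^{-1}$. One has $k=x^2+y^2+z^2-xyz-2$. Use the quaternionic model of $\mathrm{SU}(2)$: $1,\mathrm{i},\mathrm{j},\mathrm{k}$ denote the matrices $\begin{pmatrix}1&0\\0&1\end{pmatrix},\begin{pmatrix}i&0\\0&-i\end{pmatrix},\begin{pmatrix}0&1\\-1&0\end{pmatrix},\begin{pmatrix}0&i\\i&0\end{pmatrix}$. Set $\mathrm{Spin}(2)=\{\cos\theta+\sin\theta\,\mathrm{j}\}$, $\mathrm{Spin}_-(2)=\{\cos\theta\,\mathrm{k}+\sin\theta\,\mathrm{i}\}$, $\mathrm{Pin}(2)=\mathrm{Spin}(2)\cup\mathrm{Spin}_-(2)$ (the preimage of $\mathrm{O}(2)$ under $\mathrm{SU}(2)\to\mathrm{SO}(3)$). For a subgroup $G\subset\mathrm{SU}(2)$, a class $[\sigma]\in E=\operatorname{Hom}(\pi_1(M),\mathrm{SU}(2))/\mathrm{SU}(2)$ is a $G$ representation class if some representative of $[\sigma]$ takes values in $G$ (equivalently $\sigma(\pi_1(M))$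 lies in a conjugate of $G$). Classes are determined by their trace coordinates $(x,y,z)$. *)

theory Defs
  imports "HOL-Analysis.Analysis"
begin

type_synonym cmat2 = "complex^2^2"

definition mat2 :: "complex \<Rightarrow> complex \<Rightarrow> complex \<Rightarrow> complex \<Rightarrow> cmat2" where
  "mat2 a b c d = (\<chi> i j. if i = 1 then (if j = 1 then a else b) else (if j = 1 then c else d))"

definition ctrans :: "cmat2 \<Rightarrow> cmat2" where
  "ctrans A = (\<chi> i j. cnj (A $ j $ i))"

definition SU2 :: "cmat2 set" where
  "SU2 = {A. A ** ctrans A = mat 1 \<and> det A = 1}"

definition q1 :: cmat2 where "q1 = mat2 1 0 0 1"
definition qi :: cmat2 where "qi = mat2 \<i> 0 0 (- \<i>)"
definition qj :: cmat2 where "qj = mat2 0 1 (-1) 0"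
definition qk :: cmat2 where "qk = mat2 0 \<i> \<i> 0"

definition Spin2 :: "cmat2 set" where
  "Spin2 = {cos t *\<^sub>R q1 + sin t *\<^sub>R qj | t. True}"
definition Spin2_minus :: "cmat2 set" where
  "Spin2_minus = {cos t *\<^sub>R qk + sin t *\<^sub>R qi | t. True}"
definition Pin2 :: "cmat2 set" where
  "Pin2 = Spin2 \<union> Spin2_minus"

text \<open>A homomorphism from the free group on X, Y to SU(2) is determined by
  the pair (A,B) = (sigma(X), sigma(Y)). Its image sigma(pi_1(M)) is the subgroup
  generated by A and B, described here as all values of words in X, Y.\<close>
inductive_set rep_image :: "cmat2 \<Rightarrow> cmat2 \<Rightarrow> cmat2 set" for A B where
  one: "mat 1 \<in> rep_image A B"
| genX: "A \<in> rep_image A B"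
| genY: "B \<in> rep_image A B"
| mult: "u \<in> rep_image A B \<Longrightarrow> v \<in> rep_image A B \<Longrightarrow> u ** v \<in> rep_image A B"
| inv: "u \<in> rep_image A B \<Longrightarrow> matrix_inv u \<in> rep_image A B"

definition is_G_class :: "cmat2 set \<Rightarrow> cmat2 \<Rightarrow> cmat2 \<Rightarrow> bool" where
  "is_G_class G A B \<longleftrightarrow>
     (\<exists>g\<in>SU2. \<forall>u\<in>rep_image A B. g ** u ** matrix_inv g \<in> G)"

end

(*
  Identify SU(2) with the unit quaternions a + v, v in R^3. Conjugation by a unit quaternion
  fixes a and rotates v; Spin(2) consists of the unit quaternions with v on the j-axis and
  Spin_-(2) of the pure unit quaternions orthogonal to j. Since the only element of SU(2)
  with trace 2 is the identity, k = 2 exactly when sigma(X) and sigma(Y) commute, i.e. when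
  their vector parts are parallel; a common rotation then moves both into Spin(2), so [sigma]
  is a Spin(2) class iff k = 2. In a non-commuting Pin(2) pair one generator lies in
  Spin_-(2), which forces two of the traces to vanish. Conversely, two non-commuting pure
  quaternions are orthogonal to their cross product, and rotating that axis onto j puts both
  into Spin_-(2); passing from (X, Y) to (X, XY) or (Y, YX) covers the other trace conditions.
*)

theory Submission
  imports Defs
begin

unbundle cross3_syntax

section \<open>Quaternion coordinates on SU(2)\<close>

text \<open>\<^term>\<open>quat a v\<close> is the quaternion a + v$1 i + v$2 j + v$3 k.\<close>

definition quat :: "real \<Rightarrow> real^3 \<Rightarrow> cmat2" where
  "quat a v = mat2 (Complex a (v$1)) (Complex (v$2) (v$3)) (Complex (- v$2) (v$3)) (Complex a (- v$1))"

lemma cmat2_eq_iff: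
  "(M::cmat2) = N \<longleftrightarrow> M$1$1 = N$1$1 \<and> M$1$2 = N$1$2 \<and> M$2$1 = N$2$1 \<and> M$2$2 = N$2$2"
  by (auto simp: vec_eq_iff forall_2)

lemma quat_nth:
  "quat a v $ 1 $ 1 = Complex a (v$1)" "quat a v $ 1 $ 2 = Complex (v$2) (v$3)"
  "quat a v $ 2 $ 1 = Complex (- v$2) (v$3)" "quat a v $ 2 $ 2 = Complex a (- v$1)"
  by (simp_all add: quat_def mat2_def)

lemma quat_eq_iff: "quat a v = quat b w \<longleftrightarrow> a = b \<and> v = w"
  by (auto simp: cmat2_eq_iff quat_nth vec_eq_iff forall_3)

lemma quat_mult:
  "quat a v ** quat b w = quat (a * b - v \<bullet> w) (a *\<^sub>R w + b *\<^sub>R v + v \<times> w)"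
  by (simp add: cmat2_eq_iff matrix_matrix_mult_def sum_2 quat_nth complex_eq_iff
      cross3_def inner_vec_def sum_3 vector_def algebra_simps)

lemma mat_1_eq_quat: "mat 1 = quat 1 0"
  by (simp add: cmat2_eq_iff quat_nth mat_def complex_eq_iff)

lemma trace_quat: "trace (quat a v) = of_real (2 * a)"
  by (simp add: trace_def sum_2 quat_nth complex_eq_iff)

lemma det_quat: "det (quat a v) = of_real (a\<^sup>2 + v \<bullet> v)"
  by (simp add: det_2 quat_nth complex_eq_iff power2_eq_square inner_vec_def sum_3)

lemma ctrans_quat: "ctrans (quat a v) = quat a (- v)"
  by (simp add: cmat2_eq_iff ctrans_def quat_nth complex_eq_iff)

lemma matrix_inv_unique:
  fixes M N :: "'a::semiring_1^'n^'n"
  assumes "M ** N = mat 1" and "N ** M = mat 1"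
  shows "matrix_inv M = N"
proof -
  have "M ** matrix_inv M = mat 1 \<and> matrix_inv M ** M = mat 1"
    unfolding matrix_inv_def by (rule someI_ex) (use assms in blast)
  then have "matrix_inv M = matrix_inv M ** (M ** N)" and "matrix_inv M ** M = mat 1"
    using assms by simp_all
  then show ?thesis by (simp add: matrix_mul_assoc)
qed

lemma quat_mult_conj: "a\<^sup>2 + v \<bullet> v = 1 \<Longrightarrow> quat a v ** quat a (- v) = mat 1"
  and quat_conj_mult: "a\<^sup>2 + v \<bullet> v = 1 \<Longrightarrow> quat a (- v) ** quat a v = mat 1"
  by (simp_all add: quat_mult mat_1_eq_quat quat_eq_iff power2_eq_square)

lemma matrix_inv_quat: "a\<^sup>2 + v \<bullet> v = 1 \<Longrightarrow> matrix_inv (quat a v) = quat a (- v)"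
  by (simp add: matrix_inv_unique quat_mult_conj quat_conj_mult)

lemma quat_in_SU2_iff: "quat a v \<in> SU2 \<longleftrightarrow> a\<^sup>2 + v \<bullet> v = 1"
proof
  assume "quat a v \<in> SU2"
  then have "complex_of_real (a\<^sup>2 + v \<bullet> v) = 1"
    by (simp add: SU2_def det_quat)
  then show "a\<^sup>2 + v \<bullet> v = 1"
    by (metis of_real_eq_1_iff)
qed (simp add: SU2_def det_quat ctrans_quat quat_mult_conj)

lemma quat_in_SU2_iff_det: "quat a v \<in> SU2 \<longleftrightarrow> det (quat a v) = 1"
  unfolding quat_in_SU2_iff det_quat by (metis of_real_eq_1_iff)

lemma SU2_cases:
  assumes "M \<in> SU2"
  obtains a v where "M = quat a v" and "a\<^sup>2 + v \<bullet> v = 1"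
proof -
  define p q r s where "p = M$1$1" and "q = M$1$2" and "r = M$2$1" and "s = M$2$2"
  have unitary: "M ** ctrans M = mat 1" and det: "det M = 1"
    using assms by (auto simp: SU2_def)
  have row1: "p * cnj p + q * cnj q = 1"
    using arg_cong[OF unitary, of "\<lambda>X. X$1$1"]
    by (simp add: matrix_matrix_mult_def sum_2 ctrans_def mat_def p_def q_def)
  have rows: "cnj p * r + cnj q * s = 0"
    using arg_cong[OF unitary, of "\<lambda>X. X$2$1"]
    by (simp add: matrix_matrix_mult_def sum_2 ctrans_def mat_def p_def q_def r_def s_def
        mult.commute)
  have det': "p * s - q * r = 1"
    using det by (simp add: det_2 p_def q_def r_def s_def)
  have "s - cnj p = - s * (p * cnj p + q * cnj q - 1) + cnj p * (p * s - q * r - 1)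
      + q * (cnj p * r + cnj q * s)"
    by (simp add: algebra_simps)
  then have s: "s = cnj p"
    using row1 rows det' by simp
  have "r + cnj q = - r * (p * cnj p + q * cnj q - 1) - cnj q * (p * s - q * r - 1)
      + p * (cnj p * r + cnj q * s)"
    by (simp add: algebra_simps)
  then have r: "r = - cnj q"
    using row1 rows det' by (simp add: add_eq_0_iff)
  define v :: "real^3" where "v = vector [Im p, Re q, Im q]"
  show ?thesis
  proof
    show "M = quat (Re p) v"
      using r s by (simp add: cmat2_eq_iff quat_nth p_def q_def r_def s_def v_def complex_eq_iff)
    show "(Re p)\<^sup>2 + v \<bullet> v = 1"
      using arg_cong[OF row1, of Re] by (simp add: v_def inner_vec_def sum_3 power2_eq_square)
  qed
qed

lemma SU2_mult_closed:
  assumes "M \<in> SU2" and "N \<in> SU2"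
  shows "M ** N \<in> SU2"
proof -
  obtain a v b w where "M = quat a v" "N = quat b w"
    using assms by (metis SU2_cases)
  then have "M ** N = quat (a * b - v \<bullet> w) (a *\<^sub>R w + b *\<^sub>R v + v \<times> w)"
    by (simp add: quat_mult)
  moreover have "det (M ** N) = 1"
    using assms by (simp add: SU2_def det_mul)
  ultimately show ?thesis
    by (simp add: quat_in_SU2_iff_det)
qed

lemma SU2_matrix_inv:
  assumes "M \<in> SU2"
  shows "matrix_inv M \<in> SU2" and "M ** matrix_inv M = mat 1" and "matrix_inv M ** M = mat 1"
proof -
  obtain a v where "M = quat a v" and "a\<^sup>2 + v \<bullet> v = 1"
    using assms by (rule SU2_cases)
  then show "matrix_inv M \<in> SU2" "M ** matrix_inv M = mat 1" "matrix_inv M ** M = mat 1"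
    by (simp_all add: matrix_inv_quat quat_in_SU2_iff quat_mult_conj quat_conj_mult)
qed

lemma SU2_mult_left_cancel:
  assumes "M \<in> SU2"
  shows "M ** X = M ** Y \<longleftrightarrow> X = Y"
  by (metis SU2_matrix_inv(3)[OF assms] matrix_mul_assoc matrix_mul_lid)

lemma SU2_mult_right_cancel:
  assumes "M \<in> SU2"
  shows "X ** M = Y ** M \<longleftrightarrow> X = Y"
  by (metis SU2_matrix_inv(2)[OF assms] matrix_mul_assoc matrix_mul_rid)

lemma SU2_commutator_eq_1_iff:
  assumes "A \<in> SU2" and "B \<in> SU2"
  shows "A ** B ** matrix_inv A ** matrix_inv B = mat 1 \<longleftrightarrow> A ** B = B ** A"
proof -
  have "matrix_inv B ** (B ** X) = X" for X :: cmat2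
    using SU2_matrix_inv(3)[OF assms(2)] by (simp add: matrix_mul_assoc)
  then have "A ** B ** matrix_inv A ** matrix_inv B ** (B ** A) = A ** B"
    using SU2_matrix_inv(3)[OF assms(1)] by (simp add: matrix_mul_assoc[symmetric])
  then show ?thesis
    using SU2_mult_right_cancel[OF SU2_mult_closed[OF assms(2,1)]]
    by (metis matrix_mul_lid)
qed

lemma SU2_trace_eq_2_iff:
  assumes "M \<in> SU2"
  shows "trace M = 2 \<longleftrightarrow> M = mat 1"
proof -
  obtain a v where M: "M = quat a v" and unit: "a\<^sup>2 + v \<bullet> v = 1"
    using assms by (rule SU2_cases)
  have "trace M = 2 \<longleftrightarrow> a = 1"
    unfolding M trace_quat by (simp add: complex_eq_iff)
  also have "\<dots> \<longleftrightarrow> a = 1 \<and> v = 0"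
    using unit by auto
  finally show ?thesis
    by (simp add: M mat_1_eq_quat quat_eq_iff)
qed

lemma SU2_trace_commutator_eq_2_iff:
  assumes "A \<in> SU2" and "B \<in> SU2"
  shows "trace (A ** B ** matrix_inv A ** matrix_inv B) = 2 \<longleftrightarrow> A ** B = B ** A"
  using assms by (simp add: SU2_trace_eq_2_iff SU2_commutator_eq_1_iff SU2_mult_closed SU2_matrix_inv)

section \<open>Conjugation and G representation classes\<close>

definition conj_by :: "cmat2 \<Rightarrow> cmat2 \<Rightarrow> cmat2" where
  "conj_by g u = g ** u ** matrix_inv g"

lemma conj_by_mult: "g \<in> SU2 \<Longrightarrow> conj_by g (u ** v) = conj_by g u ** conj_by g v"
  unfolding conj_by_def by (metis SU2_matrix_inv(3) matrix_mul_assoc matrix_mul_lid)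

lemma conj_by_mat_1: "g \<in> SU2 \<Longrightarrow> conj_by g (mat 1) = mat 1"
  unfolding conj_by_def by (simp add: SU2_matrix_inv(2))

lemma conj_by_matrix_inv:
  assumes "g \<in> SU2" and "u \<in> SU2"
  shows "matrix_inv (conj_by g u) = conj_by g (matrix_inv u)"
  by (rule matrix_inv_unique)
    (simp_all only: conj_by_mult[OF assms(1), symmetric] SU2_matrix_inv[OF assms(2)]
      conj_by_mat_1[OF assms(1)])

lemma conj_by_in_SU2: "g \<in> SU2 \<Longrightarrow> u \<in> SU2 \<Longrightarrow> conj_by g u \<in> SU2"
  unfolding conj_by_def by (simp add: SU2_mult_closed SU2_matrix_inv)

lemma trace_conj_by: "g \<in> SU2 \<Longrightarrow> trace (conj_by g u) = trace u"
  unfolding conj_by_def by (metis SU2_matrix_inv(3) matrix_mul_assoc matrix_mul_rid trace_mul_sym)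

lemma conj_by_eq_iff:
  assumes "g \<in> SU2"
  shows "conj_by g u = conj_by g v \<longleftrightarrow> u = v"
  unfolding conj_by_def using SU2_matrix_inv[OF assms]
  by (simp add: SU2_mult_left_cancel SU2_mult_right_cancel assms)

lemma rep_image_subset_SU2: "A \<in> SU2 \<Longrightarrow> B \<in> SU2 \<Longrightarrow> rep_image A B \<subseteq> SU2"
proof
  fix u
  assume "u \<in> rep_image A B" "A \<in> SU2" "B \<in> SU2"
  then show "u \<in> SU2"
    by (induction rule: rep_image.induct) (auto simp: SU2_mult_closed SU2_matrix_inv
        mat_1_eq_quat quat_in_SU2_iff)
qed

definition SU2_subgroup :: "cmat2 set \<Rightarrow> bool" where
  "SU2_subgroup G \<longleftrightarrow> G \<subseteq> SU2 \<and> mat 1 \<in> G \<and> (\<forall>u\<in>G. \<forall>v\<in>G. u ** v \<in> G)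
     \<and> (\<forall>u\<in>G. matrix_inv u \<in> G)"

lemma is_G_class_iff:
  assumes "SU2_subgroup G" and "A \<in> SU2" and "B \<in> SU2"
  shows "is_G_class G A B \<longleftrightarrow> (\<exists>g\<in>SU2. conj_by g A \<in> G \<and> conj_by g B \<in> G)"
proof
  show "is_G_class G A B \<Longrightarrow> \<exists>g\<in>SU2. conj_by g A \<in> G \<and> conj_by g B \<in> G"
    unfolding is_G_class_def conj_by_def[symmetric] by (blast intro: rep_image.genX rep_image.genY)
next
  assume "\<exists>g\<in>SU2. conj_by g A \<in> G \<and> conj_by g B \<in> G"
  then obtain g where g: "g \<in> SU2" and gens: "conj_by g A \<in> G" "conj_by g B \<in> G"
    by blast
  have "conj_by g u \<in> G" if "u \<in> rep_image A B" for u
    using that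
  proof (induction rule: rep_image.induct)
    case (inv u)
    then have "u \<in> SU2"
      using rep_image_subset_SU2 assms(2,3) by blast
    with inv.IH show ?case
      using assms(1) g by (metis SU2_subgroup_def conj_by_matrix_inv)
  qed (use assms(1) g gens in \<open>auto simp: SU2_subgroup_def conj_by_mat_1 conj_by_mult\<close>)
  then show "is_G_class G A B"
    unfolding is_G_class_def conj_by_def[symmetric] using g by blast
qed

lemma is_G_class_mult_right:
  assumes "SU2_subgroup G" and "A \<in> SU2" and "B \<in> SU2"
  shows "is_G_class G A B \<longleftrightarrow> is_G_class G A (A ** B)"
proof -
  have "conj_by g B \<in> G \<longleftrightarrow> conj_by g (A ** B) \<in> G"
    if "g \<in> SU2" and "conj_by g A \<in> G" for g
  proof -
    have "conj_by g A \<in> SU2"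
      using that(1) assms(2) by (rule conj_by_in_SU2)
    then have "conj_by g B = matrix_inv (conj_by g A) ** (conj_by g A ** conj_by g B)"
      by (simp add: SU2_matrix_inv(3) matrix_mul_assoc)
    moreover have "conj_by g (A ** B) = conj_by g A ** conj_by g B"
      using that(1) by (rule conj_by_mult)
    ultimately show ?thesis
      using assms(1) that(2) unfolding SU2_subgroup_def by metis
  qed
  then show ?thesis
    using assms by (auto simp: is_G_class_iff SU2_mult_closed)
qed

lemma is_G_class_swap:
  assumes "SU2_subgroup G" and "A \<in> SU2" and "B \<in> SU2"
  shows "is_G_class G A B \<longleftrightarrow> is_G_class G B A"
  using assms by (auto simp: is_G_class_iff)

section \<open>Spin(2), Spin_-(2) and Pin(2) in quaternion coordinates\<close>

lemma Spin2_eq_range: "Spin2 = range (\<lambda>t. quat (cos t) (vector [0, sin t, 0]))"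
  unfolding Spin2_def
  by (auto simp: cmat2_eq_iff quat_nth q1_def qj_def mat2_def complex_eq_iff)

lemma Spin2_minus_eq_range: "Spin2_minus = range (\<lambda>t. quat 0 (vector [sin t, 0, cos t]))"
  unfolding Spin2_minus_def
  by (auto simp: cmat2_eq_iff quat_nth qk_def qi_def mat2_def complex_eq_iff)

lemma quat_in_Spin2_iff: "quat a v \<in> Spin2 \<longleftrightarrow> a\<^sup>2 + v \<bullet> v = 1 \<and> v$1 = 0 \<and> v$3 = 0"
proof
  assume "quat a v \<in> Spin2"
  then obtain t where "a = cos t" "v = vector [0, sin t, 0]"
    by (auto simp: Spin2_eq_range quat_eq_iff)
  then show "a\<^sup>2 + v \<bullet> v = 1 \<and> v$1 = 0 \<and> v$3 = 0"
    by (simp add: inner_vec_def sum_3 flip: power2_eq_square)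
next
  assume "a\<^sup>2 + v \<bullet> v = 1 \<and> v$1 = 0 \<and> v$3 = 0"
  then have "a\<^sup>2 + (v$2)\<^sup>2 = 1" and v: "v = vector [0, v$2, 0]"
    by (auto simp: inner_vec_def sum_3 power2_eq_square vec_eq_iff forall_3)
  then obtain t where "a = cos t" "v$2 = sin t"
    using sincos_total_2pi by metis
  then show "quat a v \<in> Spin2"
    unfolding Spin2_eq_range using v by auto
qed

lemma quat_in_Spin2_minus_iff: "quat a v \<in> Spin2_minus \<longleftrightarrow> a = 0 \<and> v \<bullet> v = 1 \<and> v$2 = 0"
proof
  assume "quat a v \<in> Spin2_minus"
  then obtain t where "a = 0" "v = vector [sin t, 0, cos t]"
    by (auto simp: Spin2_minus_eq_range quat_eq_iff)
  then show "a = 0 \<and> v \<bullet> v = 1 \<and> v$2 = 0"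
    by (simp add: inner_vec_def sum_3 flip: power2_eq_square)
next
  assume "a = 0 \<and> v \<bullet> v = 1 \<and> v$2 = 0"
  then have "a = 0" "(v$3)\<^sup>2 + (v$1)\<^sup>2 = 1" and v: "v = vector [v$1, 0, v$3]"
    by (auto simp: inner_vec_def sum_3 power2_eq_square vec_eq_iff forall_3)
  moreover obtain t where "v$3 = cos t" "v$1 = sin t"
    using sincos_total_2pi calculation(2) by metis
  ultimately show "quat a v \<in> Spin2_minus"
    unfolding Spin2_minus_eq_range by auto
qed

lemma Spin2_subset_SU2: "Spin2 \<subseteq> SU2"
proof
  fix M
  assume M: "M \<in> Spin2"
  then obtain a v where "M = quat a v"
    by (auto simp: Spin2_eq_range)
  with M show "M \<in> SU2"
    by (simp add: quat_in_Spin2_iff quat_in_SU2_iff)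
qed

lemma Spin2_minus_subset_SU2: "Spin2_minus \<subseteq> SU2"
proof
  fix M
  assume M: "M \<in> Spin2_minus"
  then obtain a v where "M = quat a v"
    by (auto simp: Spin2_minus_eq_range)
  with M show "M \<in> SU2"
    by (simp add: quat_in_Spin2_minus_iff quat_in_SU2_iff)
qed

lemma SU2_quat_in_Spin2_iff: "quat a v \<in> SU2 \<Longrightarrow> quat a v \<in> Spin2 \<longleftrightarrow> v$1 = 0 \<and> v$3 = 0"
  by (simp add: quat_in_Spin2_iff quat_in_SU2_iff)

lemma SU2_quat_in_Spin2_minus_iff:
  "quat a v \<in> SU2 \<Longrightarrow> quat a v \<in> Spin2_minus \<longleftrightarrow> a = 0 \<and> v$2 = 0"
  by (auto simp: quat_in_Spin2_minus_iff quat_in_SU2_iff)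

lemma SU2_subgroup_Pin2: "SU2_subgroup Pin2"
  unfolding SU2_subgroup_def
proof (intro conjI ballI)
  show "Pin2 \<subseteq> SU2"
    using Spin2_subset_SU2 Spin2_minus_subset_SU2 by (auto simp: Pin2_def)
  then have Pin2_quat: "quat a v \<in> Pin2 \<longleftrightarrow>
      quat a v \<in> SU2 \<and> (v$1 = 0 \<and> v$3 = 0 \<or> a = 0 \<and> v$2 = 0)" for a v
    by (auto simp: Pin2_def SU2_quat_in_Spin2_iff SU2_quat_in_Spin2_minus_iff)
  show "mat 1 \<in> Pin2"
    by (simp add: Pin2_quat mat_1_eq_quat quat_in_SU2_iff)
  fix u w
  assume "u \<in> Pin2" "w \<in> Pin2"
  then obtain a v b x where u: "u = quat a v" "u \<in> SU2" and w: "w = quat b x" "w \<in> SU2"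
    using \<open>Pin2 \<subseteq> SU2\<close> by (metis SU2_cases subsetD)
  show "u ** w \<in> Pin2"
    using \<open>u \<in> Pin2\<close> \<open>w \<in> Pin2\<close> SU2_mult_closed[OF u(2) w(2)]
    unfolding u(1) w(1) quat_mult Pin2_quat by (auto simp: cross3_def vector_3 inner_vec_def sum_3)
  show "matrix_inv u \<in> Pin2"
    using \<open>u \<in> Pin2\<close> SU2_matrix_inv(1)[OF u(2)] u
    by (auto simp: Pin2_quat matrix_inv_quat quat_in_SU2_iff)
qed

lemma SU2_subgroup_Spin2: "SU2_subgroup Spin2"
  unfolding SU2_subgroup_def
proof (intro conjI ballI)
  show "Spin2 \<subseteq> SU2"
    by (rule Spin2_subset_SU2)
  show "mat 1 \<in> Spin2"
    by (simp add: mat_1_eq_quat quat_in_Spin2_iff)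
  fix u w
  assume "u \<in> Spin2" "w \<in> Spin2"
  then obtain a v b x where u: "u = quat a v" "u \<in> SU2" and w: "w = quat b x" "w \<in> SU2"
    using Spin2_subset_SU2 by (metis SU2_cases subsetD)
  show "u ** w \<in> Spin2"
    using \<open>u \<in> Spin2\<close> \<open>w \<in> Spin2\<close> SU2_mult_closed[OF u(2) w(2)] u w
    unfolding u(1) w(1) quat_mult
    by (auto simp: SU2_quat_in_Spin2_iff cross3_def vector_3)
  show "matrix_inv u \<in> Spin2"
    using \<open>u \<in> Spin2\<close> SU2_matrix_inv(1)[OF u(2)] u
    by (auto simp: quat_in_Spin2_iff matrix_inv_quat)
qed

section \<open>Rotating an axis onto j\<close>

definition quat_rotate :: "real \<Rightarrow> real^3 \<Rightarrow> real^3 \<Rightarrow> real^3" where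
  "quat_rotate u0 u v = (u0\<^sup>2 - u \<bullet> u) *\<^sub>R v + (2 * (u \<bullet> v)) *\<^sub>R u + (2 * u0) *\<^sub>R (u \<times> v)"

lemma conj_by_quat:
  assumes "u0\<^sup>2 + u \<bullet> u = 1"
  shows "conj_by (quat u0 u) (quat a v) = quat a (quat_rotate u0 u v)"
proof -
  have "a * u0 * u0 + a * (u \<bullet> u) = a * (u0\<^sup>2 + u \<bullet> u)"
    by (simp add: power2_eq_square algebra_simps)
  then have "a * u0 * u0 + a * (u \<bullet> u) = a"
    using assms by simp
  then show ?thesis
    unfolding conj_by_def matrix_inv_quat[OF assms] quat_mult quat_eq_iff quat_rotate_def
    by (simp add: vec_eq_iff forall_3 cross3_def inner_vec_def sum_3 vector_3
        power2_eq_square algebra_simps)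
qed

lemma quat_rotate_onto_j_axis:
  assumes "m \<bullet> m = 1" and "m$2 > -1"
  obtains u0 u where "u0\<^sup>2 + u \<bullet> u = 1" and "\<And>v. quat_rotate u0 u v $ 2 = v \<bullet> m"
proof
  \<comment> \<open>u0 + u is the normalisation of 1 + m \<bullet> j + m \<times> j, the half-way rotation from m to j\<close>
  define s where "s = sqrt (2 * (1 + m$2))"
  have s: "s > 0" "s\<^sup>2 = 2 * (1 + m$2)"
    using assms(2) by (simp_all add: s_def)
  have m: "(m$1)\<^sup>2 + (m$2)\<^sup>2 + (m$3)\<^sup>2 = 1"
    using assms(1) by (simp add: inner_vec_def sum_3 power2_eq_square)
  define u0 where "u0 = (1 + m$2) / s"
  define u :: "real^3" where "u = (1 / s) *\<^sub>R vector [- m$3, 0, m$1]"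
  have "(u0\<^sup>2 + u \<bullet> u) * s\<^sup>2 = (1 + m$2)\<^sup>2 + (m$1)\<^sup>2 + (m$3)\<^sup>2"
    using s(1) by (simp add: u0_def u_def inner_vec_def sum_3 vector_3 field_simps power2_eq_square)
  also have "\<dots> = s\<^sup>2"
    using m s(2) by (simp add: power2_eq_square algebra_simps)
  finally show "u0\<^sup>2 + u \<bullet> u = 1"
    using s(1) by simp
  fix v :: "real^3"
  have "quat_rotate u0 u v $ 2 * s\<^sup>2 = ((1 + m$2)\<^sup>2 - (m$1)\<^sup>2 - (m$3)\<^sup>2) * v$2
      + 2 * (1 + m$2) * (m$1 * v$1 + m$3 * v$3)"
    using s(1) by (simp add: quat_rotate_def u0_def u_def inner_vec_def sum_3 vector_3 cross3_def
        field_simps power2_eq_square)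
  also have "\<dots> = (v \<bullet> m) * s\<^sup>2"
    unfolding s(2) using m by (simp add: inner_vec_def sum_3) algebra
  finally show "quat_rotate u0 u v $ 2 = v \<bullet> m"
    using s(1) by simp
qed

lemma conj_by_axis_onto_j_axis:
  assumes "n \<noteq> 0"
  obtains g where "g \<in> SU2"
    and "\<And>a v. quat a v \<in> SU2 \<Longrightarrow> v \<times> n = 0 \<Longrightarrow> conj_by g (quat a v) \<in> Spin2"
    and "\<And>v. quat 0 v \<in> SU2 \<Longrightarrow> v \<bullet> n = 0 \<Longrightarrow> conj_by g (quat 0 v) \<in> Spin2_minus"
proof -
  \<comment> \<open>the sign keeps the unit vector m away from -j, where the rotation onto j degenerates\<close>
  define e :: real where "e = (if n$2 \<ge> 0 then 1 else -1) / norm n"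
  define m where "m = e *\<^sub>R n"
  have "e\<^sup>2 * (n \<bullet> n) = 1"
    using assms by (simp add: e_def power_divide flip: power2_norm_eq_inner)
  then have "m \<bullet> m = 1"
    by (simp add: m_def power2_eq_square)
  moreover have "m$2 > -1"
    by (simp add: m_def e_def divide_nonneg_pos less_le_trans[of _ 0])
  ultimately obtain u0 u where unit: "u0\<^sup>2 + u \<bullet> u = 1"
    and j_coord: "\<And>v. quat_rotate u0 u v $ 2 = v \<bullet> m"
    using quat_rotate_onto_j_axis by blast
  have g: "quat u0 u \<in> SU2"
    using unit by (simp add: quat_in_SU2_iff)
  have rotated_SU2: "quat a (quat_rotate u0 u v) \<in> SU2" if "quat a v \<in> SU2" for a v
    using conj_by_in_SU2[OF g that] by (simp add: conj_by_quat[OF unit])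
  show ?thesis
  proof (rule that[OF g]; unfold conj_by_quat[OF unit])
    fix a v
    assume v: "quat a v \<in> SU2" "v \<times> n = 0"
    define w where "w = quat_rotate u0 u v"
    have "v \<times> m = 0"
      by (simp add: m_def cross_mult_right v(2))
    then have "(v \<bullet> m)\<^sup>2 = v \<bullet> v"
      using norm_cross[of v m] \<open>m \<bullet> m = 1\<close> by (simp add: power2_norm_eq_inner)
    moreover have "w \<bullet> w = v \<bullet> v"
      using rotated_SU2[OF v(1)] v(1) by (simp add: w_def quat_in_SU2_iff)
    ultimately have "(w$1)\<^sup>2 + (w$3)\<^sup>2 = 0"
      using j_coord[of v] by (simp add: w_def inner_vec_def sum_3 power2_eq_square)
    then have "w$1 = 0" "w$3 = 0"
      by (simp_all add: sum_power2_eq_zero_iff)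
    then show "quat a (quat_rotate u0 u v) \<in> Spin2"
      using rotated_SU2[OF v(1)] by (simp add: w_def SU2_quat_in_Spin2_iff)
  next
    fix v
    assume v: "quat 0 v \<in> SU2" "v \<bullet> n = 0"
    then have "quat_rotate u0 u v $ 2 = 0"
      by (simp add: j_coord m_def)
    then show "quat 0 (quat_rotate u0 u v) \<in> Spin2_minus"
      using rotated_SU2[OF v(1)] by (simp add: SU2_quat_in_Spin2_minus_iff)
  qed
qed

section \<open>Spin(2) and Pin(2) classes\<close>

lemma quat_commute_iff: "quat a v ** quat b w = quat b w ** quat a v \<longleftrightarrow> v \<times> w = 0"
proof -
  have "v \<times> w = w \<times> v \<longleftrightarrow> v \<times> w = 0"
    using cross_skew[of w v] by (auto simp: vec_eq_iff)
  then show ?thesis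
    by (simp add: quat_mult quat_eq_iff inner_commute algebra_simps)
qed

lemma Spin2_commute:
  assumes "u \<in> Spin2" and "w \<in> Spin2"
  shows "u ** w = w ** u"
proof -
  obtain a v b x where u: "u = quat a v" and w: "w = quat b x"
    using assms Spin2_subset_SU2 by (metis SU2_cases subsetD)
  show ?thesis
    using assms unfolding u w quat_commute_iff
    by (simp add: quat_in_Spin2_iff cross3_def vec_eq_iff forall_3 vector_3)
qed

lemma commuting_SU2_conj_into_Spin2:
  assumes "A \<in> SU2" and "B \<in> SU2" and "A ** B = B ** A"
  shows "\<exists>g\<in>SU2. conj_by g A \<in> Spin2 \<and> conj_by g B \<in> Spin2"
proof -
  obtain a v b w where A: "A = quat a v" and B: "B = quat b w"
    using assms(1,2) by (metis SU2_cases)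
  have "v \<times> w = 0"
    using assms(3) by (simp add: A B quat_commute_iff)
  define n where "n = (if v \<noteq> 0 then v else if w \<noteq> 0 then w else axis 2 1)"
  have "n \<noteq> 0"
    by (simp add: n_def)
  moreover have "v \<times> n = 0" and "w \<times> n = 0"
    using \<open>v \<times> w = 0\<close> cross_skew[of w v] by (auto simp: n_def)
  ultimately show ?thesis
    using assms(1,2) unfolding A B by (metis conj_by_axis_onto_j_axis)
qed

lemma noncommuting_trace_0_conj_into_Spin2_minus:
  assumes "A \<in> SU2" and "B \<in> SU2" and "trace A = 0" and "trace B = 0" and "A ** B \<noteq> B ** A"
  shows "\<exists>g\<in>SU2. conj_by g A \<in> Spin2_minus \<and> conj_by g B \<in> Spin2_minus"
proof -
  obtain a v b w where A: "A = quat a v" and B: "B = quat b w"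
    using assms(1,2) by (metis SU2_cases)
  have "a = 0" "b = 0"
    using assms(3,4) by (simp_all add: A B trace_quat)
  have "v \<times> w \<noteq> 0"
    using assms(5) by (simp add: A B quat_commute_iff)
  moreover have "v \<bullet> (v \<times> w) = 0" and "w \<bullet> (v \<times> w) = 0"
    by (simp_all add: dot_cross_self)
  ultimately show ?thesis
    using assms(1,2) unfolding A B \<open>a = 0\<close> \<open>b = 0\<close> by (metis conj_by_axis_onto_j_axis)
qed

lemma is_Spin2_class_iff_commute:
  assumes "A \<in> SU2" and "B \<in> SU2"
  shows "is_G_class Spin2 A B \<longleftrightarrow> A ** B = B ** A"
proof
  assume "is_G_class Spin2 A B"
  then obtain g where g: "g \<in> SU2" and "conj_by g A \<in> Spin2" "conj_by g B \<in> Spin2"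
    using assms by (auto simp: is_G_class_iff SU2_subgroup_Spin2)
  then have "conj_by g (A ** B) = conj_by g (B ** A)"
    by (simp add: conj_by_mult Spin2_commute)
  then show "A ** B = B ** A"
    using g by (simp add: conj_by_eq_iff)
next
  assume "A ** B = B ** A"
  then show "is_G_class Spin2 A B"
    using assms by (simp add: is_G_class_iff SU2_subgroup_Spin2 commuting_SU2_conj_into_Spin2)
qed

lemma trace_Spin2_minus: "u \<in> Spin2_minus \<Longrightarrow> trace u = 0"
  by (auto simp: Spin2_minus_eq_range trace_quat)

lemma trace_Spin2_minus_mult_Spin2: "u \<in> Spin2_minus \<Longrightarrow> w \<in> Spin2 \<Longrightarrow> trace (u ** w) = 0"
  by (auto simp: Spin2_minus_eq_range Spin2_eq_range quat_mult trace_quat inner_vec_def sum_3)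

lemma trace_Spin2_mult_Spin2_minus: "u \<in> Spin2 \<Longrightarrow> w \<in> Spin2_minus \<Longrightarrow> trace (u ** w) = 0"
  by (metis trace_Spin2_minus_mult_Spin2 trace_mul_sym)

lemma Pin2_not_Spin2_traces:
  assumes "u \<in> Pin2" and "w \<in> Pin2" and "\<not> (u \<in> Spin2 \<and> w \<in> Spin2)"
  shows "(trace u = 0 \<and> trace w = 0) \<or> (trace u = 0 \<and> trace (u ** w) = 0)
    \<or> (trace w = 0 \<and> trace (u ** w) = 0)"
proof -
  consider "u \<in> Spin2_minus" "w \<in> Spin2" | "u \<in> Spin2" "w \<in> Spin2_minus"
    | "u \<in> Spin2_minus" "w \<in> Spin2_minus"
    using assms by (auto simp: Pin2_def)
  then show ?thesis
    by cases (simp_all add: trace_Spin2_minus trace_Spin2_minus_mult_Spin2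
        trace_Spin2_mult_Spin2_minus)
qed

lemma is_Pin2_class_traces:
  assumes "A \<in> SU2" and "B \<in> SU2" and "is_G_class Pin2 A B" and "\<not> is_G_class Spin2 A B"
  shows "(trace A = 0 \<and> trace B = 0) \<or> (trace A = 0 \<and> trace (A ** B) = 0)
    \<or> (trace B = 0 \<and> trace (A ** B) = 0)"
proof -
  obtain g where g: "g \<in> SU2" and Pin2: "conj_by g A \<in> Pin2" "conj_by g B \<in> Pin2"
    using assms(1-3) by (auto simp: is_G_class_iff SU2_subgroup_Pin2)
  have "\<not> (conj_by g A \<in> Spin2 \<and> conj_by g B \<in> Spin2)"
    using assms(1,2,4) g by (auto simp: is_G_class_iff SU2_subgroup_Spin2)
  with Pin2 have "(trace (conj_by g A) = 0 \<and> trace (conj_by g B) = 0)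
      \<or> (trace (conj_by g A) = 0 \<and> trace (conj_by g A ** conj_by g B) = 0)
      \<or> (trace (conj_by g B) = 0 \<and> trace (conj_by g A ** conj_by g B) = 0)"
    by (rule Pin2_not_Spin2_traces)
  then show ?thesis
    using g by (simp add: trace_conj_by flip: conj_by_mult)
qed

lemma is_Pin2_class_of_traces:
  assumes "A \<in> SU2" and "B \<in> SU2" and "A ** B \<noteq> B ** A"
    and "(trace A = 0 \<and> trace B = 0) \<or> (trace A = 0 \<and> trace (A ** B) = 0)
      \<or> (trace B = 0 \<and> trace (A ** B) = 0)"
  shows "is_G_class Pin2 A B"
proof -
  have both_trace_0: "is_G_class Pin2 P Q"
    if "P \<in> SU2" "Q \<in> SU2" "trace P = 0" "trace Q = 0" "P ** Q \<noteq> Q ** P" for P Q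
    using noncommuting_trace_0_conj_into_Spin2_minus[OF that]
    unfolding is_G_class_iff[OF SU2_subgroup_Pin2 that(1,2)] by (auto simp: Pin2_def)
  have product_trace_0: "is_G_class Pin2 P Q"
    if "P \<in> SU2" "Q \<in> SU2" "trace P = 0" "trace (P ** Q) = 0" "P ** Q \<noteq> Q ** P" for P Q
  proof -
    have "P ** (P ** Q) \<noteq> (P ** Q) ** P"
      using that(1,5) by (simp add: SU2_mult_left_cancel flip: matrix_mul_assoc)
    then have "is_G_class Pin2 P (P ** Q)"
      using that by (simp add: both_trace_0 SU2_mult_closed)
    then show ?thesis
      using is_G_class_mult_right[OF SU2_subgroup_Pin2 that(1,2)] by simp
  qed
  consider "trace A = 0" "trace B = 0" | "trace A = 0" "trace (A ** B) = 0"
    | "trace B = 0" "trace (B ** A) = 0"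
    using assms(4) trace_mul_sym[of A B] by auto
  then show ?thesis
  proof cases
    case 1
    then show ?thesis
      using both_trace_0 assms(1-3) by blast
  next
    case 2
    then show ?thesis
      using product_trace_0 assms(1-3) by blast
  next
    case 3
    then have "is_G_class Pin2 B A"
      using product_trace_0[OF assms(2,1)] assms(3) by auto
    then show ?thesis
      using assms(1,2) by (simp add: is_G_class_swap SU2_subgroup_Pin2)
  qed
qed

theorem proposition3p3:
  fixes A B :: cmat2
  assumes "A \<in> SU2" and "B \<in> SU2"
  defines "x \<equiv> trace A" and "y \<equiv> trace B" and "z \<equiv> trace (A ** B)"
    and "k \<equiv> trace (A ** B ** matrix_inv A ** matrix_inv B)"
  shows "(is_G_class Pin2 A B \<and> \<not> is_G_class Spin2 A B) \<longleftrightarrow>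
         (k \<noteq> 2 \<and> ((x = 0 \<and> y = 0) \<or> (x = 0 \<and> z = 0) \<or> (y = 0 \<and> z = 0)))"
proof -
  have "k = 2 \<longleftrightarrow> A ** B = B ** A"
    unfolding k_def using assms(1,2) by (rule SU2_trace_commutator_eq_2_iff)
  moreover have "is_G_class Spin2 A B \<longleftrightarrow> A ** B = B ** A"
    using assms(1,2) by (rule is_Spin2_class_iff_commute)
  ultimately show ?thesis
    using is_Pin2_class_traces[OF assms(1,2)] is_Pin2_class_of_traces[OF assms(1,2)]
    unfolding x_def y_def z_def by blast
qed

end
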